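(* Let $m,p,q\in(0,\infty)$, let $(u,v)$ be an admissible pair of weights with respect to $(m,p)$, let $w$ be a weight and $C>0$. Then the inequality \[ \left(\int_0^\infty w(t)(f^*(t))^q\,dt\right)^{\frac1q}\le C\left(\int_0^\infty v(t)\left(\int_t^\infty u(s)(f^*(s))^m ds\right)^{\frac pm}dt\right)^{\frac1p} \] holds for all $f\in\mathscr M$ if and only if the inequality \[ \left(\int_0^\infty w(t)(f^*(t))^{\frac qm}\,dt\right)^{\frac mq}\le C^m\left(\int_0^\infty v(t)\left(\int_t^\infty u(s)f^*(s)\,ds\right)^{\frac pm}dt\right)^{\frac mp} \] holds for all $f\in\mathscr M$.
   Context: $\mathscr M$ is the set of real-valued Lebesgue measurable functions on $\mathbb{R}^n$; for $f\in\mathscr M$, $f^*(t):=\inf\{s\ge0:\ |\{x\in\mathbb{R}^n: |f(x)|>s\}|\le t\}$, $t>0$. A weight is a nonnegative measurable function on $(0,\infty)$. For a weight $u$, $U(s,t):=\int_s^t u$; $(u,v)$ is admissible with respect to $(m,p)$ if $0<\left(\int_0^t v(s)U(s,t)^{p/m}ds\right)^{1/p}<\infty$ for all $t\in(0,\infty)$. *)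

theory Defs
  imports "HOL-Analysis.Analysis"
begin

text \<open>Real powers of extended nonnegative reals (used only with positive exponents):
  infinity to a positive power is infinity, 0 to a positive power is 0.\<close>
definition epowr :: "ennreal \<Rightarrow> real \<Rightarrow> ennreal" where
  "epowr x a = (if x = top then top else ennreal (enn2real x powr a))"

definition is_weight :: "(real \<Rightarrow> real) \<Rightarrow> bool" where
  "is_weight w \<longleftrightarrow> set_borel_measurable lebesgue {0<..} w \<and> (\<forall>t>0. 0 \<le> w t)"

text \<open>Non-increasing rearrangement f*(t) = inf {s \<ge> 0 : |{|f| > s}| \<le> t}
  (value infinity if the set is empty).\<close>
definition decr_rearr :: "('a::euclidean_space \<Rightarrow> real) \<Rightarrow> real \<Rightarrow> ennreal" where
  "decr_rearr f t =
     (INF s\<in>{s::real. 0 \<le> s \<and> emeasure lebesgue {x. s < \<bar>f x\<bar>} \<le> ennreal t}. ennreal s)"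

definition Uint :: "(real \<Rightarrow> real) \<Rightarrow> real \<Rightarrow> real \<Rightarrow> ennreal" where
  "Uint u s t = (\<integral>\<^sup>+x\<in>{s<..<t}. ennreal (u x) \<partial>lebesgue)"

definition admissible :: "(real \<Rightarrow> real) \<Rightarrow> (real \<Rightarrow> real) \<Rightarrow> real \<Rightarrow> real \<Rightarrow> bool" where
  "admissible u v m p \<longleftrightarrow>
     (\<forall>t>0. 0 < epowr (\<integral>\<^sup>+s\<in>{0<..<t}. ennreal (v s) * epowr (Uint u s t) (p / m) \<partial>lebesgue) (1 / p)
          \<and> epowr (\<integral>\<^sup>+s\<in>{0<..<t}. ennreal (v s) * epowr (Uint u s t) (p / m) \<partial>lebesgue) (1 / p) < \<infinity>)"

end

theory Submission imports Defs begin

text \<open>Since \<open>r \<mapsto> r\<^sup>m\<close> is an increasing bijection of \<open>[0,\<infinity>]\<close>, the level sets of \<open>|f|\<^sup>m\<close>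
  are those of \<open>f\<close>, so \<open>(|f|\<^sup>m)\<^sup>* = (f\<^sup>*)\<^sup>m\<close>; hence the second inequality for \<open>|f|\<^sup>m\<close> is the
  \<open>m\<close>-th power of the first inequality for \<open>f\<close>. As \<open>f \<mapsto> |f|\<^sup>m\<close> maps the measurable functions
  onto the nonnegative ones and \<open>g\<^sup>* = |g|\<^sup>*\<close>, the two families of inequalities are equivalent.\<close>

lemma powr_less_mono2_iff:
  fixes x y a :: real
  assumes "0 < a" "0 \<le> x" "0 \<le> y"
  shows "x powr a < y powr a \<longleftrightarrow> x < y"
  using assms by (meson not_le powr_less_mono2 powr_mono2 less_imp_le)

lemma epowr_top [simp]: "epowr top a = top"
  by (simp add: epowr_def)

lemma epowr_ennreal: "0 \<le> x \<Longrightarrow> epowr (ennreal x) a = ennreal (x powr a)"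
  by (simp add: epowr_def)

lemma epowr_epowr: "epowr (epowr x a) b = epowr x (a * b)"
  by (cases "x = top") (simp_all add: epowr_def powr_powr)

lemma epowr_1 [simp]: "epowr x 1 = x"
  by (cases "x = top") (simp_all add: epowr_def top.not_eq_extremum)

lemma epowr_inverse: "a \<noteq> 0 \<Longrightarrow> epowr (epowr x a) (1 / a) = x"
  by (simp add: epowr_epowr)

lemma epowr_mono: "0 < a \<Longrightarrow> x \<le> y \<Longrightarrow> epowr x a \<le> epowr y a"
proof (cases "y = top")
  case False
  assume "0 < a" "x \<le> y"
  moreover from False \<open>x \<le> y\<close> have "x \<noteq> top"
    using top_unique by auto
  ultimately show ?thesis
    using False by (auto simp: epowr_def top.not_eq_extremum intro!: ennreal_leI powr_mono2 enn2real_mono)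
qed simp

lemma epowr_le_iff: "0 < a \<Longrightarrow> epowr x a \<le> epowr y a \<longleftrightarrow> x \<le> y"
  by (metis epowr_inverse epowr_mono less_numeral_extra(3) divide_pos_pos zero_less_one)

lemma epowr_mult_ennreal:
  "0 < c \<Longrightarrow> epowr (ennreal c * x) a = ennreal (c powr a) * epowr x a"
  by (cases "x = top")
     (simp_all add: ennreal_mult_top ennreal_mult_eq_top_iff epowr_def enn2real_mult powr_mult ennreal_mult)

lemma bij_epowr: "a \<noteq> 0 \<Longrightarrow> bij (\<lambda>x. epowr x a)"
  by (rule o_bij[where g = "\<lambda>x. epowr x (1 / a)"]) (simp_all add: fun_eq_iff epowr_epowr)

lemma epowr_Inf: "0 < a \<Longrightarrow> epowr (Inf A) a = (INF x\<in>A. epowr x a)"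
  by (rule mono_bij_Inf) (auto simp: mono_def epowr_mono bij_epowr)

lemma decr_rearr_abs: "decr_rearr (\<lambda>x. \<bar>f x\<bar>) = decr_rearr f"
  by (simp add: decr_rearr_def fun_eq_iff)

lemma decr_rearr_abs_powr:
  fixes f :: "'a::euclidean_space \<Rightarrow> real"
  assumes "0 < m"
  shows "decr_rearr (\<lambda>x. \<bar>f x\<bar> powr m) t = epowr (decr_rearr f t) m"
proof -
  define S where "S g = {s::real. 0 \<le> s \<and> emeasure lebesgue {x. s < \<bar>g x\<bar>} \<le> ennreal t}"
    for g :: "'a \<Rightarrow> real"
  have decr_rearr_eq: "decr_rearr g t = (INF s\<in>S g. ennreal s)" for g
    by (simp add: decr_rearr_def S_def)
  have level_sets: "{x. r powr m < \<bar>\<bar>f x\<bar> powr m\<bar>} = {x. r < \<bar>f x\<bar>}" if "0 \<le> r" for r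
    using assms that by (simp add: powr_less_mono2_iff)
  have "S (\<lambda>x. \<bar>f x\<bar> powr m) = (\<lambda>r. r powr m) ` S f"
  proof (intro equalityI subsetI)
    fix s assume s: "s \<in> S (\<lambda>x. \<bar>f x\<bar> powr m)"
    define r where "r = s powr (1 / m)"
    have "0 \<le> s"
      using s by (simp add: S_def)
    then have r_powr: "r powr m = s"
      using assms by (simp add: r_def powr_powr)
    have "0 \<le> r"
      by (simp add: r_def)
    then have same_level_set: "{x. s < \<bar>\<bar>f x\<bar> powr m\<bar>} = {x. r < \<bar>f x\<bar>}"
      using level_sets[of r] r_powr by simp
    from s have "emeasure lebesgue {x. s < \<bar>\<bar>f x\<bar> powr m\<bar>} \<le> ennreal t"
      unfolding S_def by blast
    with \<open>0 \<le> r\<close> have "r \<in> S f"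
      unfolding same_level_set S_def by blast
    then show "s \<in> (\<lambda>r. r powr m) ` S f"
      using r_powr by (rule rev_image_eqI[OF _ sym])
  next
    fix s assume "s \<in> (\<lambda>r. r powr m) ` S f"
    then obtain r where s_eq: "s = r powr m" and "r \<in> S f"
      by blast
    then have "0 \<le> r" "emeasure lebesgue {x. r < \<bar>f x\<bar>} \<le> ennreal t"
      unfolding S_def by blast+
    then show "s \<in> S (\<lambda>x. \<bar>f x\<bar> powr m)"
      unfolding s_eq S_def mem_Collect_eq level_sets[OF \<open>0 \<le> r\<close>] by simp
  qed
  then have "decr_rearr (\<lambda>x. \<bar>f x\<bar> powr m) t = (INF r\<in>S f. ennreal (r powr m))"
    by (simp only: decr_rearr_eq image_image)
  also have "\<dots> = (INF r\<in>S f. epowr (ennreal r) m)"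
    by (rule INF_cong) (auto simp: S_def epowr_ennreal)
  also have "\<dots> = epowr (INF r\<in>S f. ennreal r) m"
    using epowr_Inf[OF assms, of "ennreal ` S f"] by (simp add: image_image)
  finally show ?thesis
    by (simp only: decr_rearr_eq)
qed

lemma weighted_inequality_powr_iff:
  fixes \<phi> :: "real \<Rightarrow> ennreal" and m p q C :: real
  assumes "0 < m" "0 < p" "0 < q" "0 < C"
  shows "epowr (\<integral>\<^sup>+t\<in>{0<..}. ennreal (w t) * epowr (\<phi> t) q \<partial>lebesgue) (1 / q)
           \<le> ennreal C * epowr (\<integral>\<^sup>+t\<in>{0<..}. ennreal (v t) *
                epowr (\<integral>\<^sup>+s\<in>{t<..}. ennreal (u s) * epowr (\<phi> s) m \<partial>lebesgue) (p / m) \<partial>lebesgue) (1 / p)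
    \<longleftrightarrow> epowr (\<integral>\<^sup>+t\<in>{0<..}. ennreal (w t) * epowr (epowr (\<phi> t) m) (q / m) \<partial>lebesgue) (m / q)
           \<le> ennreal (C powr m) * epowr (\<integral>\<^sup>+t\<in>{0<..}. ennreal (v t) *
                epowr (\<integral>\<^sup>+s\<in>{t<..}. ennreal (u s) * epowr (\<phi> s) m \<partial>lebesgue) (p / m) \<partial>lebesgue) (m / p)"
    (is "epowr ?A (1 / q) \<le> ennreal C * epowr ?B (1 / p) \<longleftrightarrow> _")
proof -
  have "m * (q / m) = q"
    using assms by simp
  have "epowr ?A (1 / q) \<le> ennreal C * epowr ?B (1 / p)
      \<longleftrightarrow> epowr (epowr ?A (1 / q)) m \<le> epowr (ennreal C * epowr ?B (1 / p)) m"
    using assms by (simp add: epowr_le_iff)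
  also have "\<dots> \<longleftrightarrow> epowr ?A (m / q) \<le> ennreal (C powr m) * epowr ?B (m / p)"
    using assms by (simp add: epowr_mult_ennreal epowr_epowr)
  finally show ?thesis
    using \<open>m * (q / m) = q\<close> by (simp add: epowr_epowr)
qed

theorem proposition3p10:
  fixes m p q C :: real and u v w :: "real \<Rightarrow> real"
  assumes "0 < m" "0 < p" "0 < q"
    and "is_weight u" "is_weight v" "admissible u v m p"
    and "is_weight w" and "0 < C"
  shows "(\<forall>f :: 'a::euclidean_space \<Rightarrow> real. f \<in> borel_measurable lebesgue \<longrightarrow>
            epowr (\<integral>\<^sup>+t\<in>{0<..}. ennreal (w t) * epowr (decr_rearr f t) q \<partial>lebesgue) (1 / q)
            \<le> ennreal C * epowr (\<integral>\<^sup>+t\<in>{0<..}. ennreal (v t) *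
                 epowr (\<integral>\<^sup>+s\<in>{t<..}. ennreal (u s) * epowr (decr_rearr f s) m \<partial>lebesgue) (p / m)
               \<partial>lebesgue) (1 / p))
     \<longleftrightarrow>
         (\<forall>f :: 'a::euclidean_space \<Rightarrow> real. f \<in> borel_measurable lebesgue \<longrightarrow>
            epowr (\<integral>\<^sup>+t\<in>{0<..}. ennreal (w t) * epowr (decr_rearr f t) (q / m) \<partial>lebesgue) (m / q)
            \<le> ennreal (C powr m) * epowr (\<integral>\<^sup>+t\<in>{0<..}. ennreal (v t) *
                 epowr (\<integral>\<^sup>+s\<in>{t<..}. ennreal (u s) * decr_rearr f s \<partial>lebesgue) (p / m)
               \<partial>lebesgue) (m / p))"
    (is "(\<forall>f. _ \<longrightarrow> ?P1 f) \<longleftrightarrow> (\<forall>f. _ \<longrightarrow> ?P2 f)")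
proof -
  have first_iff_second_at_abs_powr: "?P1 f \<longleftrightarrow> ?P2 (\<lambda>x. \<bar>f x\<bar> powr m)" for f :: "'a \<Rightarrow> real"
    using weighted_inequality_powr_iff[of m p q C w "decr_rearr f" v u] assms
    by (simp add: decr_rearr_abs_powr)
  have abs_powr_inverse: "(\<lambda>x. \<bar>\<bar>g x\<bar> powr (1 / m)\<bar> powr m) = (\<lambda>x. \<bar>g x\<bar>)" for g :: "'a \<Rightarrow> real"
    using assms by (simp add: powr_powr)
  show ?thesis
  proof (intro iffI allI impI)
    fix g :: "'a \<Rightarrow> real"
    assume "\<forall>f. f \<in> borel_measurable lebesgue \<longrightarrow> ?P1 f" "g \<in> borel_measurable lebesgue"
    then have "?P1 (\<lambda>x. \<bar>g x\<bar> powr (1 / m))"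
      by (simp add: measurable_abs_powr)
    then show "?P2 g"
      by (simp only: first_iff_second_at_abs_powr abs_powr_inverse decr_rearr_abs)
  next
    fix f :: "'a \<Rightarrow> real"
    assume "\<forall>g. g \<in> borel_measurable lebesgue \<longrightarrow> ?P2 g" "f \<in> borel_measurable lebesgue"
    then show "?P1 f"
      by (simp add: first_iff_second_at_abs_powr measurable_abs_powr)
  qed
qed

end
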